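(* For every $n\ge 3$, the sun $S_n$ is distance antimagic.
   Context: The sun $S_n$ ($n\ge3$) is the graph on $2n$ vertices obtained from a cycle $x_1x_2\cdots x_n x_1$ by attaching a new pendant vertex $y_i$ adjacent only to $x_i$, for each $i=1,\dots,n$. For a graph $G=(V,E)$ with $v=|V|$ and a bijection $f:V\to\{1,\dots,v\}$, the vertex-weight of $x$ is $w(x)=\sum_{y\in N(x)}f(y)$ with $N(x)$ the set of neighbours of $x$. $G$ is distance antimagic if it admits a bijection $f$ under which all vertex-weights are pairwise distinct. *)

theory Defs
  imports Main
begin

text \<open>A simple graph is given by a finite vertex set V and a symmetric
irreflexive adjacency relation adj. Neighbourhood of x within V.\<close>

definition nbhd :: "'a set \<Rightarrow> ('a \<Rightarrow> 'a \<Rightarrow> bool) \<Rightarrow> 'a \<Rightarrow> 'a set" where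
  "nbhd V adj x = {y \<in> V. adj x y}"

definition vweight :: "'a set \<Rightarrow> ('a \<Rightarrow> 'a \<Rightarrow> bool) \<Rightarrow> ('a \<Rightarrow> nat) \<Rightarrow> 'a \<Rightarrow> nat" where
  "vweight V adj f x = (\<Sum>y\<in>nbhd V adj x. f y)"

definition distance_antimagic :: "'a set \<Rightarrow> ('a \<Rightarrow> 'a \<Rightarrow> bool) \<Rightarrow> bool" where
  "distance_antimagic V adj \<longleftrightarrow>
     (\<exists>f. bij_betw f V {1..card V} \<and> inj_on (vweight V adj f) V)"

text \<open>The sun S_n on vertex set {0..<2n}: cycle vertices x_i = i (i < n),
with x_i adjacent to x_{(i+1) mod n}; pendant vertices y_i = n + i adjacent to x_i only.\<close>

definition sun_vertices :: "nat \<Rightarrow> nat set" where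
  "sun_vertices n = {0..<2*n}"

definition sun_adj :: "nat \<Rightarrow> nat \<Rightarrow> nat \<Rightarrow> bool" where
  "sun_adj n u v \<longleftrightarrow>
     (u < n \<and> v < n \<and> (v = (u + 1) mod n \<or> u = (v + 1) mod n)) \<or>
     (u < n \<and> v = n + u) \<or> (v < n \<and> u = n + v)"

end

theory Submission
  imports Defs
begin

text \<open>Label the cycle vertices x_0, ..., x_(n-1) by 1, ..., n and the pendant y_i by 2n - i.
  A pendant y_i then has weight i + 1 \<le> n, an inner cycle vertex x_i has weight
  i + (i + 2) + (2n - i) = 2n + 2 + i \<in> [2n + 3, 3n], while x_(n-1) and x_0 get 2n + 1 and 3n + 2,
  so all weights are distinct.\<close>

lemma distance_antimagicI:
  assumes "bij_betw f V {1..card V}"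
    and "\<And>x. x \<in> V \<Longrightarrow> vweight V adj f x = w x"
    and "inj_on w V"
  shows "distance_antimagic V adj"
  using assms inj_on_cong unfolding distance_antimagic_def by metis

lemma Suc_mod_eq_if: "(y::nat) < n \<Longrightarrow> Suc y mod n = (if Suc y = n then 0 else Suc y)"
  by auto

lemma dvd_Suc_less_imp_eq: "(x::nat) < n \<Longrightarrow> n dvd Suc x \<Longrightarrow> Suc x = n"
  by (metis Suc_leI dvd_imp_le le_antisym zero_less_Suc)

lemma sun_nbhd_first:
  "n \<ge> 3 \<Longrightarrow> nbhd (sun_vertices n) (sun_adj n) 0 = {1, n - 1, n}"
  unfolding nbhd_def sun_vertices_def sun_adj_def
  by (auto simp: Suc_mod_eq_if dest: dvd_Suc_less_imp_eq split: if_splits)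

lemma sun_nbhd_last:
  "n \<ge> 3 \<Longrightarrow> nbhd (sun_vertices n) (sun_adj n) (n - Suc 0) = {0, n - 2, 2 * n - 1}"
  unfolding nbhd_def sun_vertices_def sun_adj_def
  by (auto simp: Suc_mod_eq_if split: if_splits)

lemma sun_nbhd_inner:
  "0 < v \<Longrightarrow> v < n - 1 \<Longrightarrow> nbhd (sun_vertices n) (sun_adj n) v = {v + 1, v - 1, n + v}"
  unfolding nbhd_def sun_vertices_def sun_adj_def
  by (auto simp: Suc_mod_eq_if split: if_splits)

lemma sun_nbhd_pendant:
  "n \<le> v \<Longrightarrow> v < 2 * n \<Longrightarrow> nbhd (sun_vertices n) (sun_adj n) v = {v - n}"
  unfolding nbhd_def sun_vertices_def sun_adj_def
  by (auto simp: Suc_mod_eq_if split: if_splits)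

definition sun_label :: "nat \<Rightarrow> nat \<Rightarrow> nat" where
  "sun_label n v = (if v < n then v + 1 else 3 * n - v)"

definition sun_weight :: "nat \<Rightarrow> nat \<Rightarrow> nat" where
  "sun_weight n v =
     (if v < n then (if v = 0 then 3 * n + 2 else if v = n - 1 then 2 * n + 1 else 2 * n + 2 + v)
      else v - n + 1)"

lemma bij_betw_sun_label: "bij_betw (sun_label n) (sun_vertices n) {1..2 * n}"
  by (rule bij_betw_byWitness[where f' = "\<lambda>k. if k \<le> n then k - 1 else 3 * n - k"])
     (auto simp: sun_label_def sun_vertices_def)

lemma vweight_sun_label:
  assumes "n \<ge> 3" "v < 2 * n"
  shows "vweight (sun_vertices n) (sun_adj n) (sun_label n) v = sun_weight n v"
proof -
  consider "v = 0" | "v = n - 1" | "0 < v" "v < n - 1" | "n \<le> v"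
    using assms by linarith
  then show ?thesis
  proof cases
    case 1
    then show ?thesis
      using assms by (simp add: vweight_def sun_nbhd_first sun_label_def sun_weight_def)
  next
    case 2
    then show ?thesis
      using assms by (simp add: vweight_def sun_nbhd_last sun_label_def sun_weight_def)
  next
    case 3
    then show ?thesis
      by (simp add: vweight_def sun_nbhd_inner sun_label_def sun_weight_def; linarith)
  next
    case 4
    then show ?thesis
      using assms by (simp add: vweight_def sun_nbhd_pendant sun_label_def sun_weight_def)
  qed
qed

lemma inj_on_sun_weight: "n \<ge> 3 \<Longrightarrow> inj_on (sun_weight n) (sun_vertices n)"
  unfolding inj_on_def sun_weight_def sun_vertices_def
  by (auto split: if_splits)

theorem mainTheorem8:
  fixes n :: nat
  assumes "n \<ge> 3"
  shows "distance_antimagic (sun_vertices n) (sun_adj n)"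
proof (rule distance_antimagicI)
  show "bij_betw (sun_label n) (sun_vertices n) {1..card (sun_vertices n)}"
    using bij_betw_sun_label by (simp add: sun_vertices_def)
  show "vweight (sun_vertices n) (sun_adj n) (sun_label n) v = sun_weight n v"
    if "v \<in> sun_vertices n" for v
    using vweight_sun_label assms that by (simp add: sun_vertices_def)
  show "inj_on (sun_weight n) (sun_vertices n)"
    using inj_on_sun_weight assms .
qed

end
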